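(* Let $A\in\mathbb{Z}^{\ell\times n}$ and $\bm{b}\in\mathbb{Z}^\ell$, and let $\Delta$ be an upper bound on the absolute values of all subdeterminants of $A$. If the system $A\bm{x}\le\bm{b}$ has an integral solution $\bm{x}\in\mathbb{Z}^n$, then it has an integral solution of the form $D\bm{b}+\bm{d}$, where $D\in\mathbb{Q}^{n\times\ell}$ and $\bm{d}\in\mathbb{Q}^n$ satisfy $\|D\|_{\mathrm{frac}}\le\Delta$ and $\|\bm{d}\|_{\mathrm{frac}}\le n\Delta^2$.
   Context: A subdeterminant of $A$ is the determinant of a square submatrix of $A$ (obtained by selecting some rows and equally many columns). For a rational vector or matrix $M$, $\|M\|_{\mathrm{frac}}$ denotes the maximum, over all entries of $M$, of the absolute values of the numerator and the denominator of the entry (written as a fraction $p/q$ with integers $p,q$, $q\neq0$; it suffices that some such representation satisfies the bound). Inequalities between vectors are componentwise. *)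

theory Defs
  imports "Jordan_Normal_Form.DL_Submatrix" "Jordan_Normal_Form.Determinant"
begin

definition frac_le :: "rat \<Rightarrow> int \<Rightarrow> bool" where
  "frac_le x B \<longleftrightarrow> (\<exists>p q :: int. q \<noteq> 0 \<and> x = of_int p / of_int q \<and> \<bar>p\<bar> \<le> B \<and> \<bar>q\<bar> \<le> B)"

definition frac_norm_mat_le :: "rat mat \<Rightarrow> int \<Rightarrow> bool" where
  "frac_norm_mat_le M B \<longleftrightarrow> (\<forall>i < dim_row M. \<forall>j < dim_col M. frac_le (M $$ (i, j)) B)"

definition frac_norm_vec_le :: "rat vec \<Rightarrow> int \<Rightarrow> bool" where
  "frac_norm_vec_le v B \<longleftrightarrow> (\<forall>i < dim_vec v. frac_le (v $ i) B)"

definition subdet_bound :: "int mat \<Rightarrow> int \<Rightarrow> bool" where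
  "subdet_bound A \<Delta> \<longleftrightarrow> (\<forall>I J. I \<subseteq> {..<dim_row A} \<longrightarrow> J \<subseteq> {..<dim_col A} \<longrightarrow>
      card I = card J \<longrightarrow> \<bar>det (submatrix A I J)\<bar> \<le> \<Delta>)"

end

(*
  Starting from an integral solution, move to a vertex x* of the polyhedron {x. A x <= b}:
  a rational solution together with a nonsingular square submatrix B of A whose rows are tight
  and outside whose columns x* vanishes. By Cramer's rule x* = D b, where the nonzero entries of D
  are cofactors of B divided by det B, i.e. fractions whose numerators and denominator are
  subdeterminants of A.

  By the proximity argument of Cook, Gerards, Schrijver and Tardos some integral solution z
  satisfies |z - x*| <= n Delta coordinatewise: z - x* is a nonnegative combination of integral
  vectors of norm at most Delta (cofactor vectors of A) that are conformal to it in (x, A x),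
  by Caratheodory at most n of them are needed, and if a coordinate of z - x* exceeds n Delta
  then one coefficient is at least 1, so subtracting that vector gives a closer integral solution.
  Then d = z - x* has denominator det B and numerators at most n Delta^2.
*)

theory Submission
  imports Defs
begin

section \<open>Minors indexed by lists of rows and columns\<close>

definition delete_nth :: "nat \<Rightarrow> 'a list \<Rightarrow> 'a list" where
  "delete_nth c xs = take c xs @ drop (Suc c) xs"

lemma length_delete_nth: "c < length xs \<Longrightarrow> length (delete_nth c xs) = length xs - 1"
  unfolding delete_nth_def by auto

lemma nth_delete_nth:
  "c < length xs \<Longrightarrow> b < length xs - 1 \<Longrightarrow> delete_nth c xs ! b = xs ! (if b < c then b else Suc b)"
  unfolding delete_nth_def by (auto simp: nth_append min_def)

lemma set_delete_nth_subset: "set (delete_nth c xs) \<subseteq> set xs"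
  unfolding delete_nth_def using set_take_subset set_drop_subset by fastforce

lemma distinct_delete_nth: "distinct xs \<Longrightarrow> distinct (delete_nth c xs)"
  unfolding delete_nth_def by (simp add: distinct_take distinct_drop set_take_disj_set_drop_if_distinct)

lemma delete_nth_snoc: "delete_nth (length xs) (xs @ [x]) = xs"
  unfolding delete_nth_def by auto

lemma index_mult_mat_vec_vec:
  "D \<in> carrier_mat n l \<Longrightarrow> j < n \<Longrightarrow> (D *\<^sub>v vec l f) $ j = (\<Sum>i<l. D $$ (j, i) * f i)"
  by (auto simp: mult_mat_vec_def scalar_prod_def atLeast0LessThan intro!: sum.cong)

definition index_of :: "'a list \<Rightarrow> 'a \<Rightarrow> nat" where
  "index_of xs y = (THE c. c < length xs \<and> xs ! c = y)"

lemma index_of_nth: "distinct xs \<Longrightarrow> c < length xs \<Longrightarrow> index_of xs (xs ! c) = c"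
  unfolding index_of_def by (rule the_equality) (auto simp: nth_eq_iff_index_eq)

lemma index_of_in_set:
  assumes "distinct xs" "y \<in> set xs"
  shows "index_of xs y < length xs" "xs ! index_of xs y = y"
  using assms index_of_nth by (metis in_set_conv_nth)+

text \<open>Square submatrices are addressed by lists of row and column indices; the order of the
  lists only affects the sign of the determinant.\<close>

definition minor_mat :: "(nat \<Rightarrow> nat \<Rightarrow> 'a) \<Rightarrow> nat list \<Rightarrow> nat list \<Rightarrow> 'a mat" where
  "minor_mat M rs cs = mat (length rs) (length rs) (\<lambda>(a, b). M (rs ! a) (cs ! b))"

definition minor :: "(nat \<Rightarrow> nat \<Rightarrow> 'a :: comm_ring_1) \<Rightarrow> nat list \<Rightarrow> nat list \<Rightarrow> 'a" where
  "minor M rs cs = det (minor_mat M rs cs)"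

lemma minor_Nil: "minor M [] [] = 1"
proof -
  have "minor_mat M [] [] = 1\<^sub>m 0" by (rule eq_matI) (auto simp: minor_mat_def)
  then show ?thesis unfolding minor_def by simp
qed

lemma minor_of_int: "minor (\<lambda>i j. of_int (M i j)) rs cs = of_int (minor M rs cs)"
proof -
  have "minor_mat (\<lambda>i j. of_int (M i j) :: 'a) rs cs = map_mat of_int (minor_mat M rs cs)"
    by (rule eq_matI) (auto simp: minor_mat_def)
  then show ?thesis unfolding minor_def by (simp add: of_int_hom.hom_det)
qed

lemma minor_Cons_expansion:
  assumes "length cs = Suc (length rs)"
  shows "minor M (r # rs) cs = (\<Sum>c<length cs. M r (cs ! c) * ((-1) ^ c * minor M rs (delete_nth c cs)))"
proof -
  define B where "B = minor_mat M (r # rs) cs"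
  have B: "B \<in> carrier_mat (length cs) (length cs)" unfolding B_def minor_mat_def using assms by simp
  have "minor M (r # rs) cs = (\<Sum>c<length cs. B $$ (0, c) * cofactor B 0 c)"
    unfolding minor_def B_def[symmetric] by (rule laplace_expansion_row[OF B]) (simp add: assms)
  also have "\<dots> = (\<Sum>c<length cs. M r (cs ! c) * ((-1) ^ c * minor M rs (delete_nth c cs)))"
  proof (rule sum.cong[OF refl])
    fix c assume c: "c \<in> {..<length cs}"
    have "mat_delete B 0 c = minor_mat M rs (delete_nth c cs)"
      by (rule eq_matI) (use c assms in \<open>auto simp: mat_delete_def B_def minor_mat_def nth_delete_nth length_delete_nth\<close>)
    then show "B $$ (0, c) * cofactor B 0 c = M r (cs ! c) * ((-1) ^ c * minor M rs (delete_nth c cs))"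
      using c assms unfolding cofactor_def minor_def by (simp add: B_def minor_mat_def)
  qed
  finally show ?thesis .
qed

lemma minor_Cons_mem:
  assumes "r \<in> set rs" "length cs = Suc (length rs)"
  shows "minor M (r # rs) cs = 0"
proof -
  obtain a where a: "a < length rs" "rs ! a = r" using assms(1) by (metis in_set_conv_nth)
  show ?thesis unfolding minor_def minor_mat_def
    by (rule det_identical_rows[of _ "Suc (length rs)" 0 "Suc a"])
      (use a assms in \<open>auto simp: Matrix.row_def intro!: eq_vecI\<close>)
qed

lemma adj_minor_mat:
  assumes "length rs = length cs" "a < length rs" "c < length rs"
  shows "adj_mat (minor_mat M rs cs) $$ (c, a) = (-1) ^ (a + c) * minor M (delete_nth a rs) (delete_nth c cs)"
proof -
  have "mat_delete (minor_mat M rs cs) a c = minor_mat M (delete_nth a rs) (delete_nth c cs)"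
    by (rule eq_matI) (use assms in \<open>auto simp: mat_delete_def minor_mat_def nth_delete_nth length_delete_nth\<close>)
  then show ?thesis using assms by (simp add: adj_mat_def cofactor_def minor_def minor_mat_def)
qed

lemma sum_lessThan_eq_sum_nth:
  fixes cs :: "nat list"
  assumes "distinct cs" "set cs \<subseteq> {..<n}" "\<And>j. j < n \<Longrightarrow> j \<notin> set cs \<Longrightarrow> f j = 0"
  shows "(\<Sum>j<n. f j) = (\<Sum>c<length cs. f (cs ! c))"
proof -
  have "(\<Sum>j<n. f j) = (\<Sum>j\<in>set cs. f j)"
    using assms by (intro sum.mono_neutral_right) auto
  also have "\<dots> = (\<Sum>c<length cs. f (cs ! c))"
    using assms(1) by (simp add: sum_list_distinct_conv_sum_set[symmetric] sum_list_sum_nth atLeast0LessThan)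
  finally show ?thesis .
qed

lemma minor_mult_eq_sum_adj:
  fixes M :: "nat \<Rightarrow> nat \<Rightarrow> 'a :: comm_ring_1"
  assumes cs: "distinct cs" "set cs \<subseteq> {..<n}" and len: "length rs = length cs"
    and supp: "\<And>j. j < n \<Longrightarrow> j \<notin> set cs \<Longrightarrow> x j = 0" and c: "c < length rs"
  shows "minor M rs cs * x (cs ! c)
    = (\<Sum>a<length rs. adj_mat (minor_mat M rs cs) $$ (c, a) * (\<Sum>j<n. M (rs ! a) j * x j))"
proof -
  define k where "k = length rs"
  define B where "B = minor_mat M rs cs"
  have B: "B \<in> carrier_mat k k" unfolding B_def minor_mat_def k_def by simp
  define y where "y = vec k (\<lambda>c. x (cs ! c))"
  have By: "B *\<^sub>v y = vec k (\<lambda>a. \<Sum>j<n. M (rs ! a) j * x j)"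
  proof (rule eq_vecI)
    fix a assume "a < dim_vec (vec k (\<lambda>a. \<Sum>j<n. M (rs ! a) j * x j))"
    then have a: "a < k" by simp
    have "(\<Sum>j<n. M (rs ! a) j * x j) = (\<Sum>c<length cs. M (rs ! a) (cs ! c) * x (cs ! c))"
      by (rule sum_lessThan_eq_sum_nth) (use cs supp in auto)
    also have "\<dots> = (B *\<^sub>v y) $ a"
      using a B len unfolding B_def minor_mat_def y_def k_def
      by (auto simp: mult_mat_vec_def scalar_prod_def intro!: sum.cong)
    finally show "(B *\<^sub>v y) $ a = vec k (\<lambda>a. \<Sum>j<n. M (rs ! a) j * x j) $ a" using a by simp
  qed (use B in auto)
  have "adj_mat B *\<^sub>v (B *\<^sub>v y) = (adj_mat B * B) *\<^sub>v y"
    using adj_mat(1)[OF B] B by (simp add: assoc_mult_mat_vec y_def)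
  also have "\<dots> = (det B \<cdot>\<^sub>m 1\<^sub>m k) *\<^sub>v y" unfolding adj_mat(3)[OF B] ..
  also have "\<dots> = det B \<cdot>\<^sub>v y"
    by (rule eq_vecI) (auto simp: y_def row_smult scalar_prod_left_unit)
  finally have eq: "adj_mat B *\<^sub>v vec k (\<lambda>a. \<Sum>j<n. M (rs ! a) j * x j) = det B \<cdot>\<^sub>v y"
    unfolding By .
  have "det B * x (cs ! c) = (det B \<cdot>\<^sub>v y) $ c" using c unfolding y_def k_def by simp
  also have "\<dots> = (adj_mat B *\<^sub>v vec k (\<lambda>a. \<Sum>j<n. M (rs ! a) j * x j)) $ c" unfolding eq ..
  also have "\<dots> = (\<Sum>a<k. adj_mat B $$ (c, a) * (\<Sum>j<n. M (rs ! a) j * x j))"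
    using c adj_mat(1)[OF B] unfolding k_def
    by (auto simp: mult_mat_vec_def scalar_prod_def intro!: sum.cong)
  finally show ?thesis unfolding B_def minor_def k_def .
qed

definition cofactor_vec :: "(nat \<Rightarrow> nat \<Rightarrow> 'a :: comm_ring_1) \<Rightarrow> nat list \<Rightarrow> nat list \<Rightarrow> nat \<Rightarrow> 'a" where
  "cofactor_vec M rs cs j = (\<Sum>c<length cs. if cs ! c = j then (-1) ^ c * minor M rs (delete_nth c cs) else 0)"

lemma cofactor_vec_nth:
  "distinct cs \<Longrightarrow> c < length cs \<Longrightarrow> cofactor_vec M rs cs (cs ! c) = (-1) ^ c * minor M rs (delete_nth c cs)"
  unfolding cofactor_vec_def by (subst sum.remove[of _ c]) (auto simp: nth_eq_iff_index_eq intro!: sum.neutral)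

lemma cofactor_vec_notin: "j \<notin> set cs \<Longrightarrow> cofactor_vec M rs cs j = 0"
  unfolding cofactor_vec_def by (auto intro!: sum.neutral)

lemma cofactor_vec_snoc:
  "distinct (cs @ [j]) \<Longrightarrow> cofactor_vec M rs (cs @ [j]) j = (-1) ^ length cs * minor M rs cs"
  using cofactor_vec_nth[of "cs @ [j]" "length cs" M rs] by (simp add: delete_nth_snoc)

lemma cofactor_vec_snoc_nonzero:
  "distinct (cs @ [j]) \<Longrightarrow> minor M rs cs \<noteq> 0 \<Longrightarrow> cofactor_vec M rs (cs @ [j]) j \<noteq> 0"
  by (simp add: cofactor_vec_snoc minus_one_power_iff)

lemma sum_mult_cofactor_vec:
  assumes "set cs \<subseteq> {..<n}" "length cs = Suc (length rs)"
  shows "(\<Sum>j<n. M r j * cofactor_vec M rs cs j) = minor M (r # rs) cs"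
proof -
  have "(\<Sum>j<n. M r j * cofactor_vec M rs cs j)
      = (\<Sum>c<length cs. \<Sum>j<n. if cs ! c = j then M r (cs ! c) * ((-1) ^ c * minor M rs (delete_nth c cs)) else 0)"
    unfolding cofactor_vec_def sum_distrib_left by (subst sum.swap) (auto intro!: sum.cong)
  also have "\<dots> = (\<Sum>c<length cs. M r (cs ! c) * ((-1) ^ c * minor M rs (delete_nth c cs)))"
    using assms(1) by (intro sum.cong refl) (auto dest!: nth_mem)
  also have "\<dots> = minor M (r # rs) cs" by (rule minor_Cons_expansion[OF assms(2), symmetric])
  finally show ?thesis .
qed

lemma ex_maximal_nonsingular_minor:
  fixes M :: "nat \<Rightarrow> nat \<Rightarrow> 'a :: comm_ring_1"
  assumes "finite C"
  obtains rs cs where "distinct rs" "set rs \<subseteq> R" "distinct cs" "set cs \<subseteq> C" "length rs = length cs"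
    "minor M rs cs \<noteq> 0" "\<And>i j. i \<in> R \<Longrightarrow> j \<in> C - set cs \<Longrightarrow> minor M (i # rs) (cs @ [j]) = 0"
proof -
  define P where "P k \<longleftrightarrow> (\<exists>rs cs. distinct rs \<and> set rs \<subseteq> R \<and> distinct cs \<and> set cs \<subseteq> C
     \<and> length rs = k \<and> length cs = k \<and> minor M rs cs \<noteq> 0)" for k
  have P0: "P 0" unfolding P_def by (auto simp: minor_Nil)
  have bound: "k \<le> card C" if "P k" for k
    using that card_mono[OF assms] distinct_card unfolding P_def by metis
  define K where "K = (GREATEST k. P k)"
  have "P K" unfolding K_def by (rule GreatestI_nat[of P 0 "card C", OF P0 bound])
  then obtain rs cs where rc: "distinct rs" "set rs \<subseteq> R" "distinct cs" "set cs \<subseteq> C"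
     "length rs = K" "length cs = K" "minor M rs cs \<noteq> 0" unfolding P_def by auto
  have "minor M (i # rs) (cs @ [j]) = 0" if i: "i \<in> R" and j: "j \<in> C - set cs" for i j
  proof (cases "i \<in> set rs")
    case True
    then show ?thesis by (rule minor_Cons_mem) (simp add: rc)
  next
    case False
    show ?thesis
    proof (rule ccontr)
      assume "minor M (i # rs) (cs @ [j]) \<noteq> 0"
      then have "P (Suc K)" unfolding P_def using rc i j False
        by (intro exI[of _ "i # rs"] exI[of _ "cs @ [j]"]) auto
      then show False using Greatest_le_nat[OF _ bound] K_def by fastforce
    qed
  qed
  then show ?thesis using that rc by metis
qed

lemma ex_nonzero_kernel_vector:
  fixes M :: "nat \<Rightarrow> nat \<Rightarrow> 'a :: comm_ring_1"
  assumes "n < N"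
  obtains v where "\<exists>k<N. v k \<noteq> 0" "\<And>j. j < n \<Longrightarrow> (\<Sum>k<N. M j k * v k) = 0"
proof -
  obtain rs cs where rs: "distinct rs" "set rs \<subseteq> {..<n}" and cs: "distinct cs" "set cs \<subseteq> {..<N}"
    and len: "length rs = length cs" and nonsing: "minor M rs cs \<noteq> 0"
    and maximal: "\<And>i j. i \<in> {..<n} \<Longrightarrow> j \<in> {..<N} - set cs \<Longrightarrow> minor M (i # rs) (cs @ [j]) = 0"
    using ex_maximal_nonsingular_minor[of "{..<N}" "{..<n}" M] by blast
  have "length cs < N"
    using len assms card_mono[OF _ rs(2)] distinct_card[OF rs(1)] by simp
  then have "\<not> {..<N} \<subseteq> set cs"
    using card_mono[of "set cs" "{..<N}"] distinct_card[OF cs(1)] by auto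
  then obtain c where c: "c < N" "c \<notin> set cs" by auto
  define v where "v = cofactor_vec M rs (cs @ [c])"
  have "v c \<noteq> 0" unfolding v_def using cofactor_vec_snoc_nonzero[of cs c] cs c nonsing by simp
  moreover have "(\<Sum>k<N. M j k * v k) = 0" if "j < n" for j
    unfolding v_def using that c cs len maximal
    by (subst sum_mult_cofactor_vec) auto
  ultimately show ?thesis using that c by blast
qed

section \<open>Conic Caratheodory and sign conformity\<close>

lemma conic_caratheodory:
  fixes G :: "nat \<Rightarrow> nat \<Rightarrow> 'a :: linordered_field" and Q :: "(nat \<Rightarrow> 'a) \<Rightarrow> bool"
  assumes "\<forall>k<N. lam k \<ge> 0 \<and> Q (G k)" "\<forall>j<n. w j = (\<Sum>k<N. lam k * G k j)"
  shows "\<exists>N' lam' G'. N' \<le> n \<and> (\<forall>k<N'. lam' k \<ge> 0 \<and> Q (G' k)) \<and> (\<forall>j<n. w j = (\<Sum>k<N'. lam' k * G' k j))"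
  using assms
proof (induction N arbitrary: lam G rule: less_induct)
  case (less N)
  show ?case
  proof (cases "N \<le> n")
    case True
    then show ?thesis using less.prems by blast
  next
    case False
    obtain \<mu> where \<mu>: "\<exists>k<N. \<mu> k \<noteq> 0" "\<And>j. j < n \<Longrightarrow> (\<Sum>k<N. G k j * \<mu> k) = 0"
      using ex_nonzero_kernel_vector[of n N "\<lambda>j k. G k j"] False by auto
    obtain \<nu> where \<nu>: "\<exists>k<N. \<nu> k > 0" "\<And>j. j < n \<Longrightarrow> (\<Sum>k<N. G k j * \<nu> k) = 0"
    proof (cases "\<exists>k<N. \<mu> k > 0")
      case True
      then show ?thesis using that \<mu>(2) by blast
    next
      case False
      then have "\<exists>k<N. - \<mu> k > 0" using \<mu>(1) by (auto simp: neq_iff)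
      moreover have "(\<Sum>k<N. G k j * - \<mu> k) = 0" if "j < n" for j
        using \<mu>(2)[OF that] by (simp add: sum_negf)
      ultimately show ?thesis using that[of "\<lambda>k. - \<mu> k"] by blast
    qed
    define K where "K = {k. k < N \<and> \<nu> k > 0}"
    have K: "finite K" "K \<noteq> {}" unfolding K_def using \<nu>(1) by auto
    define s where "s = Min ((\<lambda>k. lam k / \<nu> k) ` K)"
    have "s \<in> (\<lambda>k. lam k / \<nu> k) ` K" unfolding s_def using K by (intro Min_in) auto
    then obtain k0 where k0: "k0 \<in> K" "lam k0 / \<nu> k0 = s" by auto
    have s_le: "s \<le> lam k / \<nu> k" if "k \<in> K" for k unfolding s_def using K that by auto
    have s_nonneg: "s \<ge> 0" using k0 less.prems(1) unfolding K_def by auto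
    define lam2 where "lam2 k = lam k - s * \<nu> k" for k
    have lam2_nonneg: "lam2 k \<ge> 0" if "k < N" for k
    proof (cases "k \<in> K")
      case True
      then show ?thesis using s_le[OF True] unfolding K_def lam2_def by (simp add: pos_le_divide_eq)
    next
      case False
      then have "s * \<nu> k \<le> 0" using that s_nonneg unfolding K_def by (simp add: mult_nonneg_nonpos)
      then show ?thesis using less.prems(1) that unfolding lam2_def by force
    qed
    have k0N: "k0 < N" and lam2_k0: "lam2 k0 = 0" using k0 unfolding lam2_def K_def by auto
    have w_lam2: "w j = (\<Sum>k<N. lam2 k * G k j)" if "j < n" for j
    proof -
      have "(\<Sum>k<N. lam2 k * G k j) = (\<Sum>k<N. lam k * G k j) - s * (\<Sum>k<N. G k j * \<nu> k)"
        unfolding lam2_def by (simp add: algebra_simps sum_subtractf sum_distrib_left)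
      then show ?thesis using \<nu>(2)[OF that] less.prems(2) that by simp
    qed
    text \<open>Drop the term k0 by moving the last term into its slot.\<close>
    define p where "p k = (if k = k0 then N - 1 else k)" for k
    have p: "bij_betw p {..<N - 1} ({..<N} - {k0})"
      unfolding bij_betw_def inj_on_def p_def using k0N by (auto simp: image_def)
    have drop_k0: "(\<Sum>k<N. f k) = (\<Sum>k<N - 1. f (p k))" if "f k0 = 0" for f :: "nat \<Rightarrow> 'a"
    proof -
      have "(\<Sum>k<N. f k) = sum f ({..<N} - {k0})" using that k0N by (simp add: sum.remove)
      also have "\<dots> = (\<Sum>k<N - 1. f (p k))" by (rule sum.reindex_bij_betw[OF p, symmetric])
      finally show ?thesis .
    qed
    show ?thesis
    proof (rule less.IH[of "N - 1" "\<lambda>k. lam2 (p k)" "\<lambda>k. G (p k)"])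
      show "\<forall>k<N - 1. 0 \<le> lam2 (p k) \<and> Q (G (p k))"
        using lam2_nonneg less.prems(1) k0N unfolding p_def by auto
      show "\<forall>j<n. w j = (\<Sum>k<N - 1. lam2 (p k) * G (p k) j)"
        using w_lam2 drop_k0[of "\<lambda>k. lam2 k * G k j" for j] lam2_k0 by auto
    qed (use k0N in simp)
  qed
qed

definition sign_conform :: "'a :: linordered_idom \<Rightarrow> 'a \<Rightarrow> bool" where
  "sign_conform a b \<longleftrightarrow> (0 < a \<longrightarrow> 0 < b) \<and> (a < 0 \<longrightarrow> b < 0)"

lemma sign_conform_trans: "sign_conform a b \<Longrightarrow> sign_conform b c \<Longrightarrow> sign_conform a c"
  unfolding sign_conform_def by blast

lemma sign_conform_iff: "sign_conform a b \<longleftrightarrow> (a \<noteq> 0 \<longrightarrow> b \<noteq> 0) \<and> 0 \<le> a * b"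
  unfolding sign_conform_def
  by (metis linorder_neqE_linordered_idom mult_neg_neg mult_pos_pos mult_pos_neg mult_neg_pos
      less_imp_le not_less mult_eq_0_iff)

lemma sign_conform_diff_scaled:
  fixes a e t :: "'a :: linordered_field"
  assumes t: "t > 0" and ratio: "a * e > 0 \<Longrightarrow> t \<le> a / e" and nz: "e \<noteq> 0 \<Longrightarrow> a \<noteq> 0"
  shows "sign_conform (a - t * e) a"
proof (cases "e = 0")
  case False
  then consider "a > 0" "e > 0" | "a > 0" "e < 0" | "a < 0" "e > 0" | "a < 0" "e < 0"
    using nz by (meson linorder_neqE_linordered_idom)
  then show ?thesis
  proof cases
    case 1
    then show ?thesis using ratio t by (simp add: pos_le_divide_eq sign_conform_def)
  next
    case 2
    then show ?thesis using mult_pos_neg[OF t, of e] by (simp add: sign_conform_def)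
  next
    case 3
    then show ?thesis using mult_pos_pos[OF t, of e] by (simp add: sign_conform_def)
  next
    case 4
    then show ?thesis using ratio t by (simp add: neg_le_divide_eq mult_neg_neg sign_conform_def)
  qed
qed (simp add: sign_conform_def)

lemma abs_sum_sign_conform:
  fixes x :: "nat \<Rightarrow> 'a :: linordered_idom"
  assumes "\<forall>k<N. lam k \<ge> 0" "\<forall>k<N. sign_conform (x k) a" "a = (\<Sum>k<N. lam k * x k)"
  shows "\<bar>a\<bar> = (\<Sum>k<N. lam k * \<bar>x k\<bar>)"
proof (cases "a \<ge> 0")
  case True
  then have "\<forall>k<N. x k \<ge> 0" using assms(2) unfolding sign_conform_def by force
  then show ?thesis using True assms(1,3) by (auto intro!: sum.cong)
next
  case False
  then have "\<forall>k<N. x k \<le> 0" using assms(2) unfolding sign_conform_def by force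
  then have "(\<Sum>k<N. lam k * \<bar>x k\<bar>) = - (\<Sum>k<N. lam k * x k)"
    using assms(1) by (auto simp: sum_negf[symmetric] intro!: sum.cong)
  then show ?thesis using False assms(3) by simp
qed

lemma abs_diff_eq_diff_abs:
  fixes a b :: "'a :: linordered_idom"
  assumes "0 \<le> a * b" "\<bar>a\<bar> \<le> \<bar>b\<bar>"
  shows "\<bar>b - a\<bar> = \<bar>b\<bar> - \<bar>a\<bar>"
  using assms by (cases "0 \<le> a"; cases "0 \<le> b") (auto simp: zero_le_mult_iff)

section \<open>Subdeterminant bounds\<close>

lemma ex_permutation_pick_nth:
  assumes "distinct rs"
  obtains p where "p permutes {0..<length rs}" "\<And>a. a < length rs \<Longrightarrow> pick (set rs) (p a) = rs ! a"
proof
  define R where "R = set rs"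
  define p where "p a = (if a < length rs then card {x\<in>R. x < rs ! a} else a)" for a
  have card_R: "card R = length rs" unfolding R_def using assms distinct_card by blast
  have p_nth: "p a = card {x\<in>R. x < rs ! a}" if "a < length rs" for a using that unfolding p_def by simp
  have in_R: "rs ! a \<in> R" if "a < length rs" for a using that unfolding R_def by auto
  show pick: "pick (set rs) (p a) = rs ! a" if "a < length rs" for a
    using p_nth[OF that] in_R[OF that] pick_card_in_set unfolding R_def by metis
  have "p a < length rs" if "a < length rs" for a
  proof -
    have "{x\<in>R. x < rs ! a} \<subset> R" using in_R[OF that] by blast
    then have "card {x\<in>R. x < rs ! a} < card R" by (rule psubset_card_mono[rotated]) (simp add: R_def)
    then show ?thesis using p_nth[OF that] card_R by simp
  qed
  then have "p ` {0..<length rs} \<subseteq> {0..<length rs}" by auto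
  moreover have inj: "inj_on p {0..<length rs}"
  proof
    fix a b assume ab: "a \<in> {0..<length rs}" "b \<in> {0..<length rs}" "p a = p b"
    then have "rs ! a = rs ! b" using pick by (metis atLeastLessThan_iff)
    then show "a = b" using ab assms by (simp add: nth_eq_iff_index_eq)
  qed
  ultimately have "bij_betw p {0..<length rs} {0..<length rs}"
    unfolding bij_betw_def using endo_inj_surj[of "{0..<length rs}" p] by simp
  then show "p permutes {0..<length rs}" by (rule bij_imp_permutes) (simp add: p_def)
qed

lemma abs_minor_eq_abs_det_submatrix:
  fixes A :: "int mat"
  assumes A: "A \<in> carrier_mat l n"
    and rs: "distinct rs" "set rs \<subseteq> {..<l}" and cs: "distinct cs" "set cs \<subseteq> {..<n}"
    and len: "length rs = length cs"
  shows "\<bar>minor (\<lambda>i j. A $$ (i, j)) rs cs\<bar> = \<bar>det (submatrix A (set rs) (set cs))\<bar>"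
proof -
  define k where "k = length rs"
  define S where "S = submatrix A (set rs) (set cs)"
  have "{i. i < dim_row A \<and> i \<in> set rs} = set rs" "{j. j < dim_col A \<and> j \<in> set cs} = set cs"
    using rs cs A by auto
  then have card: "card {i. i < dim_row A \<and> i \<in> set rs} = k" "card {j. j < dim_col A \<and> j \<in> set cs} = k"
    using distinct_card[OF rs(1)] distinct_card[OF cs(1)] len k_def by simp_all
  have S: "S \<in> carrier_mat k k" unfolding S_def using card by (auto simp: dim_submatrix)
  have S_index: "S $$ (a, b) = A $$ (pick (set rs) a, pick (set cs) b)" if "a < k" "b < k" for a b
    unfolding S_def using that card by (intro submatrix_index) auto
  obtain p where p: "p permutes {0..<k}" "\<And>a. a < k \<Longrightarrow> pick (set rs) (p a) = rs ! a"
    using ex_permutation_pick_nth[OF rs(1)] unfolding k_def by metis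
  obtain q where q: "q permutes {0..<k}" "\<And>a. a < k \<Longrightarrow> pick (set cs) (q a) = cs ! a"
    using ex_permutation_pick_nth[OF cs(1)] unfolding k_def len by metis
  have pk: "p a < k" "q a < k" if "a < k" for a
    using permutes_in_image[OF p(1)] permutes_in_image[OF q(1)] that by auto
  define T where "T = mat k k (\<lambda>(a, b). S $$ (a, q b))"
  have T: "T \<in> carrier_mat k k" unfolding T_def by auto
  have "minor_mat (\<lambda>i j. A $$ (i, j)) rs cs = mat k k (\<lambda>(i, j). T $$ (p i, j))"
    by (rule eq_matI) (auto simp: minor_mat_def k_def[symmetric] T_def S_index pk p(2) q(2))
  then have "minor (\<lambda>i j. A $$ (i, j)) rs cs = signof p * det T"
    unfolding minor_def using det_permute_rows[OF T p(1)] by simp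
  moreover have "det T = signof q * det S"
  proof -
    have "transpose_mat T = mat k k (\<lambda>(i, j). transpose_mat S $$ (q i, j))"
      by (rule eq_matI) (use S in \<open>auto simp: T_def pk\<close>)
    then have "det (transpose_mat T) = signof q * det (transpose_mat S)"
      using det_permute_rows[of "transpose_mat S" k q] S q(1) by simp
    then show ?thesis using det_transpose[OF T] det_transpose[OF S] by simp
  qed
  ultimately show ?thesis unfolding S_def by (simp add: abs_mult sign_def)
qed

lemma abs_minor_le_subdet_bound:
  assumes A: "A \<in> carrier_mat l n" and bound: "subdet_bound A \<Delta>"
    and rs: "distinct rs" "set rs \<subseteq> {..<l}" and cs: "distinct cs" "set cs \<subseteq> {..<n}"
    and len: "length rs = length cs"
  shows "\<bar>minor (\<lambda>i j. A $$ (i, j)) rs cs\<bar> \<le> \<Delta>"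
proof -
  have "card (set rs) = card (set cs)" using distinct_card rs(1) cs(1) len by metis
  moreover have "set rs \<subseteq> {..<dim_row A}" "set cs \<subseteq> {..<dim_col A}" using rs cs A by auto
  ultimately have "\<bar>det (submatrix A (set rs) (set cs))\<bar> \<le> \<Delta>"
    using bound unfolding subdet_bound_def by blast
  then show ?thesis unfolding abs_minor_eq_abs_det_submatrix[OF A rs cs len] .
qed

lemma subdet_bound_ge_1:
  assumes "subdet_bound A \<Delta>"
  shows "1 \<le> \<Delta>"
proof -
  have "submatrix A {} {} = 1\<^sub>m 0" by (rule eq_matI) (auto simp: dim_submatrix)
  moreover have "\<bar>det (submatrix A {} {})\<bar> \<le> \<Delta>" using assms unfolding subdet_bound_def by blast
  ultimately show ?thesis by simp
qed

lemma frac_le_if_mult_Ints: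
  assumes "q \<noteq> 0" "\<bar>q\<bar> \<le> B" "of_int q * x \<in> \<int>" "\<bar>of_int q * x\<bar> \<le> of_int B"
  shows "frac_le x B"
proof -
  obtain p where p: "of_int q * x = of_int p" using assms(3) by (rule Ints_cases)
  then have "x = of_int p / of_int q" using assms(1) by (simp add: field_simps)
  moreover have "\<bar>p\<bar> \<le> B" using assms(4) unfolding p by linarith
  ultimately show ?thesis unfolding frac_le_def using assms(1,2) by blast
qed

lemma frac_le_diff_if_close:
  fixes x z :: rat and q \<Delta> :: int
  assumes q: "q \<noteq> 0" "\<bar>q\<bar> \<le> \<Delta>" and \<Delta>: "1 \<le> \<Delta>" and n: "0 < n"
    and x: "of_int q * x \<in> \<int>" and z: "z \<in> \<int>" and close: "\<bar>z - x\<bar> \<le> of_nat n * of_int \<Delta>"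
  shows "frac_le (z - x) (int n * \<Delta>\<^sup>2)"
proof (rule frac_le_if_mult_Ints[OF q(1)])
  have "1 \<le> int n * \<Delta>" using \<Delta> n mult_mono[of 1 "int n" 1 \<Delta>] by simp
  then have "\<Delta> \<le> int n * \<Delta>\<^sup>2"
    using \<Delta> mult_right_mono[of 1 "int n * \<Delta>" \<Delta>] by (simp add: power2_eq_square mult.assoc)
  then show "\<bar>q\<bar> \<le> int n * \<Delta>\<^sup>2" using q(2) by simp
  show "of_int q * (z - x) \<in> \<int>" using x z by (simp add: right_diff_distrib)
  have "\<bar>of_int q * (z - x)\<bar> = of_int \<bar>q\<bar> * \<bar>z - x\<bar>" by (simp add: abs_mult)
  also have "\<dots> \<le> of_int \<Delta> * (of_nat n * of_int \<Delta>)"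
    using close q(2) by (intro mult_mono) auto
  also have "\<dots> = of_int (int n * \<Delta>\<^sup>2)" by (simp add: power2_eq_square ac_simps)
  finally show "\<bar>of_int q * (z - x)\<bar> \<le> of_int (int n * \<Delta>\<^sup>2)" .
qed

section \<open>Basic feasible solutions and Cramer's rule\<close>

locale int_matrix =
  fixes A :: "int mat" and l n :: nat
  assumes A_carrier: "A \<in> carrier_mat l n"
begin

definition Aq :: "nat \<Rightarrow> nat \<Rightarrow> rat" where
  "Aq i j = rat_of_int (A $$ (i, j))"

text \<open>Vectors are modelled as functions on the index set {..<n}.\<close>

definition row_prod :: "nat \<Rightarrow> (nat \<Rightarrow> rat) \<Rightarrow> rat" where
  "row_prod i x = (\<Sum>j<n. Aq i j * x j)"

definition feasible :: "(nat \<Rightarrow> rat) \<Rightarrow> (nat \<Rightarrow> rat) \<Rightarrow> bool" where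
  "feasible b x \<longleftrightarrow> (\<forall>i<l. row_prod i x \<le> b i)"

lemma row_prod_add_scaled: "row_prod i (\<lambda>k. x k + t * y k) = row_prod i x + t * row_prod i y"
  unfolding row_prod_def by (simp add: algebra_simps sum.distrib sum_distrib_left)

lemma row_prod_diff: "row_prod i (\<lambda>k. x k - y k) = row_prod i x - row_prod i y"
  unfolding row_prod_def by (simp add: algebra_simps sum_subtractf)

lemma row_prod_uminus: "row_prod i (\<lambda>k. - y k) = - row_prod i y"
  unfolding row_prod_def by (simp add: sum_negf)

lemma row_prod_cong: "(\<And>j. j < n \<Longrightarrow> x j = y j) \<Longrightarrow> row_prod i x = row_prod i y"
  unfolding row_prod_def by auto

lemma row_prod_cofactor_vec:
  assumes "set cs \<subseteq> {..<n}" "length cs = Suc (length rs)"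
  shows "row_prod i (cofactor_vec Aq rs cs) = minor Aq (i # rs) cs"
  unfolding row_prod_def by (rule sum_mult_cofactor_vec[OF assms])

lemma minor_Aq: "minor Aq rs cs = of_int (minor (\<lambda>i j. A $$ (i, j)) rs cs)"
  unfolding Aq_def[abs_def] by (rule minor_of_int)

definition valid_indices :: "nat list \<Rightarrow> nat list \<Rightarrow> bool" where
  "valid_indices rs cs \<longleftrightarrow> distinct rs \<and> set rs \<subseteq> {..<l} \<and> distinct cs \<and> set cs \<subseteq> {..<n}"

definition basic_feasible :: "(nat \<Rightarrow> rat) \<Rightarrow> (nat \<Rightarrow> rat) \<Rightarrow> nat list \<Rightarrow> nat list \<Rightarrow> bool" where
  "basic_feasible b x rs cs \<longleftrightarrow> feasible b x \<and> valid_indices rs cs \<and> length rs = length cs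
     \<and> minor Aq rs cs \<noteq> 0 \<and> (\<forall>r\<in>set rs. row_prod r x = b r)"

lemma ratio_test:
  assumes feas: "feasible b x" and i1: "i1 < l" "row_prod i1 u > 0"
  obtains t i0 where "t \<ge> 0" "i0 < l" "row_prod i0 u > 0" "feasible b (\<lambda>k. x k + t * u k)"
    "row_prod i0 (\<lambda>k. x k + t * u k) = b i0"
proof -
  define I where "I = {i. i < l \<and> row_prod i u > 0}"
  define f where "f i = (b i - row_prod i x) / row_prod i u" for i
  have I: "finite I" "I \<noteq> {}" using i1 unfolding I_def by auto
  define t where "t = Min (f ` I)"
  have "t \<in> f ` I" unfolding t_def using I by (intro Min_in) auto
  then obtain i0 where i0: "i0 \<in> I" "f i0 = t" by auto
  have t_le: "t \<le> f i" if "i \<in> I" for i unfolding t_def using I that by auto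
  have t_nonneg: "0 \<le> t" using i0 feas unfolding f_def I_def feasible_def by auto
  have "row_prod i x + t * row_prod i u \<le> b i" if i: "i < l" for i
  proof (cases "i \<in> I")
    case True
    then have "t * row_prod i u \<le> f i * row_prod i u"
      using t_le[OF True] unfolding I_def by (simp add: mult_right_mono)
    also have "\<dots> = b i - row_prod i x" using True unfolding f_def I_def by simp
    finally show ?thesis by simp
  next
    case False
    then have "t * row_prod i u \<le> 0" using i t_nonneg unfolding I_def by (simp add: mult_nonneg_nonpos)
    then show ?thesis using feas i unfolding feasible_def by (meson add_le_same_cancel1 order_trans)
  qed
  then have "feasible b (\<lambda>k. x k + t * u k)" unfolding feasible_def row_prod_add_scaled by blast
  moreover have "row_prod i0 x + t * row_prod i0 u = b i0"
    using i0 unfolding f_def I_def by (auto simp: field_simps)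
  ultimately show ?thesis using that t_nonneg i0 unfolding I_def row_prod_add_scaled by blast
qed

text \<open>Decreases when the basis grows, or when a nonbasic coordinate of x becomes zero.\<close>

definition basis_measure :: "(nat \<Rightarrow> rat) \<Rightarrow> nat list \<Rightarrow> nat" where
  "basis_measure x cs = (n - length cs) * (n + 1) + card {j. j < n \<and> x j \<noteq> 0 \<and> j \<notin> set cs}"

lemma basic_feasible_step:
  assumes basic: "basic_feasible b x rs cs" and j: "j < n" "x j \<noteq> 0" "j \<notin> set cs"
  obtains x' rs' cs' where "basic_feasible b x' rs' cs'" "basis_measure x' cs' < basis_measure x cs"
proof -
  from basic have feas: "feasible b x" and valid: "valid_indices rs cs" and len: "length rs = length cs"
    and nonsing: "minor Aq rs cs \<noteq> 0" and tight: "\<forall>r\<in>set rs. row_prod r x = b r"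
    unfolding basic_feasible_def by auto
  define cs' where "cs' = cs @ [j]"
  define v where "v = cofactor_vec Aq rs cs'"
  have valid': "valid_indices rs cs'" using valid j unfolding valid_indices_def cs'_def by auto
  have len': "length cs' = Suc (length rs)" using len cs'_def by simp
  have vj: "v j \<noteq> 0"
    unfolding v_def cs'_def using cofactor_vec_snoc_nonzero valid' nonsing
    unfolding valid_indices_def cs'_def by blast
  have v_notin: "v k = 0" if "k \<notin> set cs'" for k using cofactor_vec_notin[OF that] v_def by simp
  have row_v: "row_prod i v = minor Aq (i # rs) cs'" for i
    unfolding v_def using valid' len' by (intro row_prod_cofactor_vec) (auto simp: valid_indices_def)
  have row_v_tight: "row_prod r v = 0" if "r \<in> set rs" for r
    unfolding row_v by (rule minor_Cons_mem[OF that len'])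
  show ?thesis
  proof (cases "\<forall>i<l. row_prod i v = 0")
    case True
    define x' where "x' k = x k + (- x j / v j) * v k" for k
    have "row_prod i x' = row_prod i x" if "i < l" for i
      unfolding x'_def row_prod_add_scaled using True that by simp
    then have "basic_feasible b x' rs cs"
      using basic valid unfolding basic_feasible_def feasible_def valid_indices_def by auto
    moreover have "basis_measure x' cs < basis_measure x cs"
    proof -
      have "x' k = x k" if "k \<noteq> j" "k \<notin> set cs" for k
        using v_notin that unfolding x'_def cs'_def by simp
      moreover have "x' j = 0" using vj unfolding x'_def by simp
      ultimately have "{k. k < n \<and> x' k \<noteq> 0 \<and> k \<notin> set cs} \<subset> {k. k < n \<and> x k \<noteq> 0 \<and> k \<notin> set cs}"
        using j by force
      then show ?thesis unfolding basis_measure_def by (simp add: psubset_card_mono)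
    qed
    ultimately show ?thesis by (rule that)
  next
    case False
    then obtain i1 where i1: "i1 < l" "row_prod i1 v \<noteq> 0" by auto
    text \<open>Move along v or -v, whichever increases some row, until a new row becomes tight.\<close>
    obtain u where u: "row_prod i1 u > 0" "\<And>i. row_prod i u \<noteq> 0 \<longleftrightarrow> row_prod i v \<noteq> 0"
    proof (cases "row_prod i1 v > 0")
      case True
      then show ?thesis using that[of v] by blast
    next
      case False
      then show ?thesis using that[of "\<lambda>k. - v k"] i1 by (simp add: row_prod_uminus)
    qed
    obtain t i0 where t: "t \<ge> 0" and i0: "i0 < l" "row_prod i0 u > 0"
      and feas': "feasible b (\<lambda>k. x k + t * u k)" and tight0: "row_prod i0 (\<lambda>k. x k + t * u k) = b i0"
      using ratio_test[OF feas i1(1) u(1)] by blast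
    have "i0 \<notin> set rs" using i0(2) u(2) row_v_tight by force
    moreover have "row_prod r (\<lambda>k. x k + t * u k) = b r" if "r \<in> set rs" for r
      using tight that u(2)[of r] row_v_tight[OF that] unfolding row_prod_add_scaled by auto
    moreover have "minor Aq (i0 # rs) cs' \<noteq> 0" using i0(2) u(2)[of i0] unfolding row_v by auto
    ultimately have "basic_feasible b (\<lambda>k. x k + t * u k) (i0 # rs) cs'"
      using valid' len' feas' tight0 i0(1) unfolding basic_feasible_def valid_indices_def by auto
    moreover have "basis_measure (\<lambda>k. x k + t * u k) cs' < basis_measure x cs"
    proof -
      have "length cs' \<le> n"
        using valid' card_mono[of "{..<n}" "set cs'"] distinct_card[of cs'] unfolding valid_indices_def by auto
      then have "n - length cs = Suc (n - length cs')" unfolding cs'_def by simp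
      moreover have "card {k. k < n \<and> x k + t * u k \<noteq> 0 \<and> k \<notin> set cs'} \<le> n"
        using card_mono[of "{..<n}" "{k. k < n \<and> x k + t * u k \<noteq> 0 \<and> k \<notin> set cs'}"] by auto
      ultimately show ?thesis unfolding basis_measure_def by simp
    qed
    ultimately show ?thesis by (rule that)
  qed
qed

lemma ex_basic_feasible_supported:
  assumes "basic_feasible b x rs cs"
  shows "\<exists>x' rs' cs'. basic_feasible b x' rs' cs' \<and> (\<forall>j<n. j \<notin> set cs' \<longrightarrow> x' j = 0)"
  using assms
proof (induction "basis_measure x cs" arbitrary: x rs cs rule: less_induct)
  case less
  show ?case
  proof (cases "\<forall>j<n. j \<notin> set cs \<longrightarrow> x j = 0")
    case True
    then show ?thesis using less.prems by blast
  next
    case False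
    then obtain j where "j < n" "x j \<noteq> 0" "j \<notin> set cs" by blast
    then obtain x' rs' cs' where "basic_feasible b x' rs' cs'" "basis_measure x' cs' < basis_measure x cs"
      using basic_feasible_step[OF less.prems] by blast
    then show ?thesis using less.hyps by blast
  qed
qed

lemma basic_feasible_cramer:
  assumes basic: "basic_feasible b x rs cs" and supp: "\<And>j. j < n \<Longrightarrow> j \<notin> set cs \<Longrightarrow> x j = 0"
    and c: "c < length rs"
  shows "minor Aq rs cs * x (cs ! c) = (\<Sum>a<length rs. adj_mat (minor_mat Aq rs cs) $$ (c, a) * b (rs ! a))"
proof -
  have "minor Aq rs cs * x (cs ! c) = (\<Sum>a<length rs. adj_mat (minor_mat Aq rs cs) $$ (c, a) * row_prod (rs ! a) x)"
    unfolding row_prod_def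
    by (rule minor_mult_eq_sum_adj) (use basic supp c in \<open>auto simp: basic_feasible_def valid_indices_def\<close>)
  also have "\<dots> = (\<Sum>a<length rs. adj_mat (minor_mat Aq rs cs) $$ (c, a) * b (rs ! a))"
    using basic unfolding basic_feasible_def by (intro sum.cong refl) auto
  finally show ?thesis .
qed

lemma feasible_cong:
  assumes "\<And>j. j < n \<Longrightarrow> x j = y j"
  shows "feasible b x \<longleftrightarrow> feasible b y"
  unfolding feasible_def using row_prod_cong[of x y, OF assms] by simp

lemma feasible_iff_mult_mat_vec_le:
  assumes "v \<in> carrier_vec n"
  shows "feasible b (\<lambda>j. v $ j) \<longleftrightarrow> (\<forall>i<l. (map_mat rat_of_int A *\<^sub>v v) $ i \<le> b i)"
proof -
  have "(map_mat rat_of_int A *\<^sub>v v) $ i = row_prod i (\<lambda>j. v $ j)" if "i < l" for i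
    using A_carrier assms that
    by (auto simp: mult_mat_vec_def scalar_prod_def atLeast0LessThan row_prod_def Aq_def intro!: sum.cong)
  then show ?thesis unfolding feasible_def by auto
qed

lemma row_prod_of_int:
  "x \<in> carrier_vec n \<Longrightarrow> i < l \<Longrightarrow> row_prod i (\<lambda>j. rat_of_int (x $ j)) = rat_of_int ((A *\<^sub>v x) $ i)"
  using A_carrier
  by (auto simp: mult_mat_vec_def scalar_prod_def atLeast0LessThan row_prod_def Aq_def intro!: sum.cong)

definition cramer_mat :: "nat list \<Rightarrow> nat list \<Rightarrow> rat mat" where
  "cramer_mat rs cs = mat n l (\<lambda>(j, i). if j \<in> set cs \<and> i \<in> set rs
     then adj_mat (minor_mat Aq rs cs) $$ (index_of cs j, index_of rs i) / minor Aq rs cs else 0)"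

lemma cramer_mat_carrier: "cramer_mat rs cs \<in> carrier_mat n l"
  unfolding cramer_mat_def by simp

lemma cramer_mat_mult_vec:
  assumes basic: "basic_feasible b x rs cs" and supp: "\<And>j. j < n \<Longrightarrow> j \<notin> set cs \<Longrightarrow> x j = 0"
    and j: "j < n"
  shows "(cramer_mat rs cs *\<^sub>v vec l b) $ j = x j"
proof (cases "j \<in> set cs")
  case True
  from basic have rs: "distinct rs" "set rs \<subseteq> {..<l}" and cs: "distinct cs"
    and len: "length rs = length cs" and nonsing: "minor Aq rs cs \<noteq> 0"
    unfolding basic_feasible_def valid_indices_def by auto
  define c where "c = index_of cs j"
  have c: "c < length rs" "cs ! c = j" using index_of_in_set[OF cs True] len unfolding c_def by auto
  have "(cramer_mat rs cs *\<^sub>v vec l b) $ j = (\<Sum>i<l. cramer_mat rs cs $$ (j, i) * b i)"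
    by (rule index_mult_mat_vec_vec[OF cramer_mat_carrier j])
  also have "\<dots> = (\<Sum>a<length rs. cramer_mat rs cs $$ (j, rs ! a) * b (rs ! a))"
    using j by (intro sum_lessThan_eq_sum_nth rs) (auto simp: cramer_mat_def)
  also have "\<dots> = (\<Sum>a<length rs. adj_mat (minor_mat Aq rs cs) $$ (c, a) * b (rs ! a)) / minor Aq rs cs"
    unfolding sum_divide_distrib using j True rs(2) nth_mem[of _ rs] index_of_nth[OF rs(1)]
    by (intro sum.cong refl) (auto simp: cramer_mat_def c_def subset_iff)
  also have "\<dots> = x j"
    using basic_feasible_cramer[OF basic supp c(1)] nonsing c(2) by (simp add: field_simps)
  finally show ?thesis .
next
  case False
  then show ?thesis
    using supp j unfolding index_mult_mat_vec_vec[OF cramer_mat_carrier j] by (simp add: cramer_mat_def)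
qed

lemma minor_Aq_Ints: "minor Aq rs cs \<in> \<int>"
  unfolding minor_Aq by simp

end

section \<open>Conformal decomposition and proximity\<close>

context int_matrix
begin

text \<open>The vector (w, A w), indexed by {..<n + l}; conformality is taken with respect to it.\<close>

definition ext :: "(nat \<Rightarrow> rat) \<Rightarrow> nat \<Rightarrow> rat" where
  "ext w c = (if c < n then w c else row_prod (c - n) w)"

definition conformal :: "(nat \<Rightarrow> rat) \<Rightarrow> (nat \<Rightarrow> rat) \<Rightarrow> bool" where
  "conformal g w \<longleftrightarrow> (\<forall>c<n + l. sign_conform (ext g c) (ext w c))"

definition ext_support :: "(nat \<Rightarrow> rat) \<Rightarrow> nat set" where
  "ext_support w = {c. c < n + l \<and> ext w c \<noteq> 0}"

lemma ext_diff_scaled: "ext (\<lambda>k. x k - t * y k) c = ext x c - t * ext y c"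
  using row_prod_add_scaled[of "c - n" x "- t" y] unfolding ext_def by simp

lemma ext_uminus: "ext (\<lambda>k. - y k) c = - ext y c"
  unfolding ext_def by (simp add: row_prod_uminus)

lemma ext_eq_0: "\<forall>j<n. w j = 0 \<Longrightarrow> ext w c = 0"
  unfolding ext_def row_prod_def by simp

lemma ext_sum:
  assumes "\<forall>j<n. w j = (\<Sum>k<N. lam k * G k j)" "c < n + l"
  shows "ext w c = (\<Sum>k<N. lam k * ext (G k) c)"
proof (cases "c < n")
  case False
  have "row_prod (c - n) w = row_prod (c - n) (\<lambda>j. \<Sum>k<N. lam k * G k j)"
    using assms(1) by (intro row_prod_cong) auto
  also have "\<dots> = (\<Sum>k<N. lam k * row_prod (c - n) (G k))"
    unfolding row_prod_def by (simp add: sum_distrib_left algebra_simps sum.swap[of _ "{..<n}"])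
  finally show ?thesis using False unfolding ext_def by simp
qed (use assms in \<open>simp add: ext_def\<close>)

lemma ext_support_shrink:
  assumes sub: "\<And>c. c < n + l \<Longrightarrow> ext u c \<noteq> 0 \<Longrightarrow> ext w c \<noteq> 0"
    and pos: "\<exists>c<n + l. ext w c * ext u c > 0"
  obtains t where "t > 0" "\<And>c. c < n + l \<Longrightarrow> sign_conform (ext (\<lambda>k. w k - t * u k) c) (ext w c)"
    "card (ext_support (\<lambda>k. w k - t * u k)) < card (ext_support w)"
proof -
  define C where "C = {c. c < n + l \<and> ext w c * ext u c > 0}"
  define t where "t = Min ((\<lambda>c. ext w c / ext u c) ` C)"
  have C: "finite C" "C \<noteq> {}" unfolding C_def using pos by auto
  have "t \<in> (\<lambda>c. ext w c / ext u c) ` C" unfolding t_def using C by (intro Min_in) auto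
  then obtain c0 where c0: "c0 \<in> C" "ext w c0 / ext u c0 = t" by auto
  have t_le: "t \<le> ext w c / ext u c" if "c \<in> C" for c unfolding t_def using C that by auto
  have t: "t > 0" using c0 unfolding C_def by (auto simp: zero_less_divide_iff zero_less_mult_iff)
  define w' where "w' k = w k - t * u k" for k
  have ext_w': "ext w' c = ext w c - t * ext u c" for c unfolding w'_def ext_diff_scaled ..
  have conform: "sign_conform (ext w' c) (ext w c)" if "c < n + l" for c
    unfolding ext_w' using t_le sub that by (intro sign_conform_diff_scaled[OF t]) (auto simp: C_def)
  have "ext_support w' \<subset> ext_support w"
  proof
    show "ext_support w' \<subseteq> ext_support w"
      using conform unfolding ext_support_def sign_conform_iff by auto
    have "ext w' c0 = 0" using c0 unfolding ext_w' C_def by auto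
    then show "ext_support w' \<noteq> ext_support w" using c0 unfolding ext_support_def C_def by force
  qed
  then have "card (ext_support w') < card (ext_support w)"
    by (rule psubset_card_mono[rotated]) (simp add: ext_support_def)
  then show ?thesis using that t conform unfolding w'_def by blast
qed

end

locale subdet_bounded = int_matrix +
  fixes \<Delta> :: int
  assumes subdet_bound: "subdet_bound A \<Delta>"
begin

lemma Delta_ge_1: "1 \<le> \<Delta>"
  using subdet_bound_ge_1[OF subdet_bound] .

lemma abs_minor_Aq_le:
  assumes "valid_indices rs cs" "length rs = length cs"
  shows "\<bar>minor Aq rs cs\<bar> \<le> of_int \<Delta>"
proof -
  have "\<bar>minor (\<lambda>i j. A $$ (i, j)) rs cs\<bar> \<le> \<Delta>"
    by (rule abs_minor_le_subdet_bound[OF A_carrier subdet_bound]) (use assms in \<open>auto simp: valid_indices_def\<close>)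
  then show ?thesis unfolding minor_Aq by (metis of_int_abs of_int_le_iff)
qed

lemma valid_indices_delete_nth: "valid_indices rs cs \<Longrightarrow> valid_indices (delete_nth a rs) (delete_nth c cs)"
  using set_delete_nth_subset[of a rs] set_delete_nth_subset[of c cs]
  unfolding valid_indices_def by (auto simp: distinct_delete_nth)

lemma adj_minor_mat_Aq:
  assumes "valid_indices rs cs" "length rs = length cs" "a < length rs" "c < length rs"
  shows "adj_mat (minor_mat Aq rs cs) $$ (c, a) \<in> \<int>" "\<bar>adj_mat (minor_mat Aq rs cs) $$ (c, a)\<bar> \<le> of_int \<Delta>"
proof -
  have "\<bar>minor Aq (delete_nth a rs) (delete_nth c cs)\<bar> \<le> of_int \<Delta>"
    by (rule abs_minor_Aq_le) (use assms in \<open>auto simp: valid_indices_delete_nth length_delete_nth\<close>)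
  then show "\<bar>adj_mat (minor_mat Aq rs cs) $$ (c, a)\<bar> \<le> of_int \<Delta>"
    unfolding adj_minor_mat[OF assms(2-4)] by (simp add: abs_mult)
  show "adj_mat (minor_mat Aq rs cs) $$ (c, a) \<in> \<int>"
    unfolding adj_minor_mat[OF assms(2-4)] using minor_Aq_Ints by simp
qed

lemma cramer_mat_entry:
  assumes valid: "valid_indices rs cs" and len: "length rs = length cs" and nonsing: "minor Aq rs cs \<noteq> 0"
    and ji: "j < n" "i < l"
  shows "minor Aq rs cs * cramer_mat rs cs $$ (j, i) \<in> \<int> \<and>
    \<bar>minor Aq rs cs * cramer_mat rs cs $$ (j, i)\<bar> \<le> of_int \<Delta>"
proof (cases "j \<in> set cs \<and> i \<in> set rs")
  case True
  then have "index_of cs j < length rs" "index_of rs i < length rs"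
    using index_of_in_set(1)[of rs i] index_of_in_set(1)[of cs j] valid len
    unfolding valid_indices_def by auto
  moreover have "minor Aq rs cs * cramer_mat rs cs $$ (j, i)
      = adj_mat (minor_mat Aq rs cs) $$ (index_of cs j, index_of rs i)"
    using True nonsing ji by (simp add: cramer_mat_def)
  ultimately show ?thesis using adj_minor_mat_Aq[OF valid len] by simp
next
  case False
  then show ?thesis using ji Delta_ge_1 by (auto simp: cramer_mat_def)
qed

lemma cofactor_vec_Aq:
  assumes "valid_indices rs cs" "length cs = Suc (length rs)"
  shows "cofactor_vec Aq rs cs j \<in> \<int>" "\<bar>cofactor_vec Aq rs cs j\<bar> \<le> of_int \<Delta>"
proof -
  show "cofactor_vec Aq rs cs j \<in> \<int>"
    unfolding cofactor_vec_def using minor_Aq_Ints by (intro Ints_sum) auto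
  show "\<bar>cofactor_vec Aq rs cs j\<bar> \<le> of_int \<Delta>"
  proof (cases "j \<in> set cs")
    case True
    then obtain c where c: "c < length cs" "cs ! c = j" by (metis in_set_conv_nth)
    have "\<bar>minor Aq rs (delete_nth c cs)\<bar> \<le> of_int \<Delta>"
      by (rule abs_minor_Aq_le) (use assms c in \<open>auto simp: valid_indices_def distinct_delete_nth length_delete_nth
          dest: set_delete_nth_subset[THEN subsetD]\<close>)
    then show ?thesis
      using cofactor_vec_nth[of cs c Aq rs] c assms(1) unfolding valid_indices_def by (simp add: abs_mult)
  next
    case False
    then show ?thesis using Delta_ge_1 by (simp add: cofactor_vec_notin[OF False, of Aq rs])
  qed
qed

lemma ex_vertex_solution:
  assumes feas: "feasible b x" and b_int: "\<forall>i<l. b i \<in> \<int>"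
  obtains D q where "D \<in> carrier_mat n l" "q \<noteq> 0" "\<bar>q\<bar> \<le> \<Delta>"
    "\<And>j i. j < n \<Longrightarrow> i < l \<Longrightarrow> of_int q * D $$ (j, i) \<in> \<int> \<and> \<bar>of_int q * D $$ (j, i)\<bar> \<le> of_int \<Delta>"
    "\<forall>j<n. of_int q * (D *\<^sub>v vec l b) $ j \<in> \<int>" "feasible b (\<lambda>j. (D *\<^sub>v vec l b) $ j)"
proof -
  have "basic_feasible b x [] []"
    using feas unfolding basic_feasible_def valid_indices_def by (simp add: minor_Nil)
  then obtain x' rs cs where basic: "basic_feasible b x' rs cs" and supp: "\<forall>j<n. j \<notin> set cs \<longrightarrow> x' j = 0"
    using ex_basic_feasible_supported by blast
  then have valid: "valid_indices rs cs" and len: "length rs = length cs" and nonsing: "minor Aq rs cs \<noteq> 0"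
    unfolding basic_feasible_def by auto
  define q where "q = minor (\<lambda>i j. A $$ (i, j)) rs cs"
  define D where "D = cramer_mat rs cs"
  have q: "minor Aq rs cs = of_int q" unfolding q_def minor_Aq ..
  have entries: "of_int q * D $$ (j, i) \<in> \<int> \<and> \<bar>of_int q * D $$ (j, i)\<bar> \<le> of_int \<Delta>" if "j < n" "i < l" for j i
    using cramer_mat_entry[OF valid len nonsing that] unfolding q D_def by simp
  have "of_int q * (D *\<^sub>v vec l b) $ j \<in> \<int>" if j: "j < n" for j
  proof -
    have "of_int q * (D *\<^sub>v vec l b) $ j = (\<Sum>i<l. (of_int q * D $$ (j, i)) * b i)"
      unfolding D_def index_mult_mat_vec_vec[OF cramer_mat_carrier j]
      by (subst sum_distrib_left) (simp add: mult.assoc)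
    also have "\<dots> \<in> \<int>" using entries[OF j] b_int by (intro Ints_sum) (metis Ints_mult lessThan_iff)
    finally show ?thesis .
  qed
  moreover have "feasible b (\<lambda>j. (D *\<^sub>v vec l b) $ j)"
  proof -
    have "row_prod i (\<lambda>j. (D *\<^sub>v vec l b) $ j) = row_prod i x'" for i
      by (rule row_prod_cong) (simp add: D_def cramer_mat_mult_vec[OF basic] supp)
    then show ?thesis using basic unfolding basic_feasible_def feasible_def by simp
  qed
  moreover have "\<bar>q\<bar> \<le> \<Delta>"
    using abs_minor_Aq_le[OF valid len] unfolding q by linarith
  ultimately show ?thesis
    using that[of D q] entries nonsing cramer_mat_carrier unfolding q D_def by auto
qed

definition small_integral :: "(nat \<Rightarrow> rat) \<Rightarrow> bool" where
  "small_integral g \<longleftrightarrow> (\<forall>j. g j \<in> \<int> \<and> \<bar>g j\<bar> \<le> of_int \<Delta>)"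

text \<open>A maximal nonsingular minor of the columns in the support of w and the rows on which
  A w vanishes can be extended by a further support column; its cofactor vector is the
  desired integral vector.\<close>

lemma ex_small_integral_support_subset:
  assumes "\<exists>j<n. w j \<noteq> 0"
  obtains u where "small_integral u" "\<exists>j<n. u j \<noteq> 0" "\<And>c. c < n + l \<Longrightarrow> ext u c \<noteq> 0 \<Longrightarrow> ext w c \<noteq> 0"
proof -
  define S where "S = {j. j < n \<and> w j \<noteq> 0}"
  define Z where "Z = {i. i < l \<and> row_prod i w = 0}"
  obtain rs cs where rs: "distinct rs" "set rs \<subseteq> Z" and cs: "distinct cs" "set cs \<subseteq> S"
    and len: "length rs = length cs" and nonsing: "minor Aq rs cs \<noteq> 0"
    and maximal: "\<And>i j. i \<in> Z \<Longrightarrow> j \<in> S - set cs \<Longrightarrow> minor Aq (i # rs) (cs @ [j]) = 0"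
    using ex_maximal_nonsingular_minor[of S Z Aq] unfolding S_def by auto
  have valid: "valid_indices rs cs" using rs cs unfolding valid_indices_def Z_def S_def by auto
  have "\<not> S \<subseteq> set cs"
  proof
    assume "S \<subseteq> set cs"
    then have supp: "\<And>j. j < n \<Longrightarrow> j \<notin> set cs \<Longrightarrow> w j = 0" unfolding S_def by auto
    obtain j0 where j0: "j0 < n" "w j0 \<noteq> 0" using assms by auto
    then obtain c where c: "c < length cs" "cs ! c = j0" using supp by (metis in_set_conv_nth)
    have "minor Aq rs cs * w (cs ! c)
        = (\<Sum>a<length rs. adj_mat (minor_mat Aq rs cs) $$ (c, a) * row_prod (rs ! a) w)"
      unfolding row_prod_def
      by (rule minor_mult_eq_sum_adj) (use valid len supp c in \<open>auto simp: valid_indices_def\<close>)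
    also have "\<dots> = 0" using rs(2) nth_mem unfolding Z_def by (force intro!: sum.neutral)
    finally show False using nonsing j0 c by simp
  qed
  then obtain j where j: "j \<in> S" "j \<notin> set cs" by blast
  define cs' where "cs' = cs @ [j]"
  define u where "u = cofactor_vec Aq rs cs'"
  have valid': "valid_indices rs cs'" using valid j unfolding valid_indices_def cs'_def S_def by auto
  have len': "length cs' = Suc (length rs)" using len cs'_def by simp
  have "u j \<noteq> 0" using cofactor_vec_snoc_nonzero[of cs j Aq rs] j cs nonsing unfolding u_def cs'_def by simp
  moreover have "j < n" using j unfolding S_def by simp
  moreover have "small_integral u" unfolding small_integral_def u_def using cofactor_vec_Aq[OF valid' len'] by blast
  moreover have "ext w c \<noteq> 0" if c: "c < n + l" "ext u c \<noteq> 0" for c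
  proof (cases "c < n")
    case True
    then have "c \<in> set cs'" using c cofactor_vec_notin unfolding u_def ext_def by fastforce
    then show ?thesis using cs(2) j True unfolding cs'_def S_def ext_def by auto
  next
    case False
    then have "row_prod (c - n) u \<noteq> 0" "c - n < l" using c unfolding ext_def by auto
    then show ?thesis
      using maximal[of "c - n" j] j False valid' len' row_prod_cofactor_vec
      unfolding u_def cs'_def Z_def ext_def valid_indices_def by auto
  qed
  ultimately show ?thesis using that by blast
qed

lemma ex_small_integral_conformal:
  assumes "\<exists>j<n. w j \<noteq> 0"
  shows "\<exists>g. small_integral g \<and> (\<exists>j<n. g j \<noteq> 0) \<and> conformal g w"
  using assms
proof (induction "card (ext_support w)" arbitrary: w rule: less_induct)
  case less
  obtain u where u: "small_integral u" "\<exists>j<n. u j \<noteq> 0"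
    and sub: "\<And>c. c < n + l \<Longrightarrow> ext u c \<noteq> 0 \<Longrightarrow> ext w c \<noteq> 0"
    using ex_small_integral_support_subset[OF less.prems] by blast
  have conform_iff: "sign_conform (ext u c) (ext w c) \<longleftrightarrow> 0 \<le> ext w c * ext u c"
    and conform_uminus_iff: "sign_conform (ext (\<lambda>k. - u k) c) (ext w c) \<longleftrightarrow> ext w c * ext u c \<le> 0"
    if "c < n + l" for c
    using sub[OF that] by (auto simp: sign_conform_iff ext_uminus mult.commute)
  show ?case
  proof (cases "conformal u w \<or> conformal (\<lambda>k. - u k) w")
    case True
    moreover have "small_integral (\<lambda>k. - u k)" using u(1) unfolding small_integral_def by simp
    moreover have "\<exists>j<n. - u j \<noteq> 0" using u(2) by simp
    ultimately show ?thesis using u by blast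
  next
    case False
    text \<open>u is neither conformal nor anti-conformal to w: shrink the support of w along u.\<close>
    then obtain c1 c2 where c1: "c1 < n + l" "ext w c1 * ext u c1 > 0"
      and c2: "c2 < n + l" "ext w c2 * ext u c2 < 0"
      using conform_iff conform_uminus_iff unfolding conformal_def by (meson not_le)
    obtain t where t: "t > 0"
      and conform: "\<And>c. c < n + l \<Longrightarrow> sign_conform (ext (\<lambda>k. w k - t * u k) c) (ext w c)"
      and smaller: "card (ext_support (\<lambda>k. w k - t * u k)) < card (ext_support w)"
      using ext_support_shrink[OF sub] c1 by blast
    have "ext (\<lambda>k. w k - t * u k) c2 \<noteq> 0"
    proof
      assume "ext (\<lambda>k. w k - t * u k) c2 = 0"
      then have "ext w c2 * ext u c2 = t * (ext u c2 * ext u c2)" unfolding ext_diff_scaled by simp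
      moreover have "0 \<le> t * (ext u c2 * ext u c2)" using t by simp
      ultimately show False using c2(2) by linarith
    qed
    then have "\<exists>j<n. w j - t * u j \<noteq> 0" using ext_eq_0[of "\<lambda>k. w k - t * u k" c2] by blast
    then obtain g where "small_integral g" "\<exists>j<n. g j \<noteq> 0" "conformal g (\<lambda>k. w k - t * u k)"
      using less.hyps[OF smaller] by blast
    then show ?thesis using conform unfolding conformal_def by (meson sign_conform_trans)
  qed
qed
lemma ex_conformal_decomposition:
  "\<exists>(N :: nat) lam G. (\<forall>k<N. lam k \<ge> 0 \<and> small_integral (G k) \<and> conformal (G k) w)
     \<and> (\<forall>j<n. w j = (\<Sum>k<N. lam k * G k j))"
proof (induction "card (ext_support w)" arbitrary: w rule: less_induct)
  case less
  show ?case
  proof (cases "\<forall>j<n. w j = 0")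
    case True
    then show ?thesis by (intro exI[of _ "0::nat"]) simp
  next
    case False
    then obtain g where g: "small_integral g" "\<exists>j<n. g j \<noteq> 0" "conformal g w"
      using ex_small_integral_conformal by blast
    then obtain j1 where j1: "j1 < n" "ext g j1 \<noteq> 0" unfolding ext_def by auto
    have sub: "ext w c \<noteq> 0" if "c < n + l" "ext g c \<noteq> 0" for c
      using g(3) that unfolding conformal_def sign_conform_iff by blast
    have "ext w j1 * ext g j1 > 0"
      using g(3) j1 sub[of j1] unfolding conformal_def sign_conform_iff
      by (simp add: mult.commute order_le_neq_trans)
    then have "\<exists>c<n + l. ext w c * ext g c > 0" using j1(1) by (intro exI[of _ j1]) simp
    then obtain t where t: "t > 0"
      and conform: "\<And>c. c < n + l \<Longrightarrow> sign_conform (ext (\<lambda>k. w k - t * g k) c) (ext w c)"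
      and smaller: "card (ext_support (\<lambda>k. w k - t * g k)) < card (ext_support w)"
      using ext_support_shrink[OF sub] by blast
    obtain N :: nat and lam G where dec: "\<forall>k<N. lam k \<ge> 0 \<and> small_integral (G k) \<and> conformal (G k) (\<lambda>k. w k - t * g k)"
      "\<forall>j<n. w j - t * g j = (\<Sum>k<N. lam k * G k j)"
      using less.hyps[OF smaller] by blast
    have "\<forall>k<Suc N. (lam(N := t)) k \<ge> 0 \<and> small_integral ((G(N := g)) k) \<and> conformal ((G(N := g)) k) w"
    proof -
      have "conformal (G k) w" if "k < N" for k
        using dec(1) that conform sign_conform_trans unfolding conformal_def by blast
      then show ?thesis using dec(1) g t by (auto simp: less_Suc_eq)
    qed
    moreover have "\<forall>j<n. w j = (\<Sum>k<Suc N. (lam(N := t)) k * (G(N := g)) k j)"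
      using dec(2) by (simp add: algebra_simps)
    ultimately show ?thesis by blast
  qed
qed

text \<open>By Caratheodory at most n terms are needed, so one term carries at least a 1/n share of
  the large coordinate, and its coefficient is then at least 1.\<close>

lemma ex_small_integral_conformal_le:
  assumes j0: "j0 < n" and big: "\<bar>w j0\<bar> > of_nat n * of_int \<Delta>"
  obtains g where "small_integral g" "\<exists>j<n. g j \<noteq> 0"
    "\<And>c. c < n + l \<Longrightarrow> 0 \<le> ext g c * ext w c \<and> \<bar>ext g c\<bar> \<le> \<bar>ext w c\<bar>"
proof -
  obtain N0 :: nat and lam0 G0 where dec0: "\<forall>k<N0. lam0 k \<ge> 0 \<and> small_integral (G0 k) \<and> conformal (G0 k) w"
    "\<forall>j<n. w j = (\<Sum>k<N0. lam0 k * G0 k j)"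
    using ex_conformal_decomposition by blast
  obtain N :: nat and lam G where N: "N \<le> n" and dec: "\<forall>k<N. lam k \<ge> 0 \<and> small_integral (G k) \<and> conformal (G k) w"
    and w: "\<forall>j<n. w j = (\<Sum>k<N. lam k * G k j)"
    using conic_caratheodory[where Q = "\<lambda>g. small_integral g \<and> conformal g w", OF dec0] by blast
  have abs_ext: "\<bar>ext w c\<bar> = (\<Sum>k<N. lam k * \<bar>ext (G k) c\<bar>)" if c: "c < n + l" for c
    using dec c unfolding conformal_def by (intro abs_sum_sign_conform ext_sum[OF w c]) auto
  have "\<exists>k<N. lam k * \<bar>G k j0\<bar> > of_int \<Delta>"
  proof (rule ccontr)
    assume "\<not> ?thesis"
    then have "\<And>k. k \<in> {..<N} \<Longrightarrow> lam k * \<bar>G k j0\<bar> \<le> of_int \<Delta>" using not_less by blast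
    then have "(\<Sum>k<N. lam k * \<bar>G k j0\<bar>) \<le> of_nat N * of_int \<Delta>"
      using sum_bounded_above[of "{..<N}" "\<lambda>k. lam k * \<bar>G k j0\<bar>" "of_int \<Delta>"] by simp
    also have "\<dots> \<le> of_nat n * of_int \<Delta>" using N Delta_ge_1 by (simp add: mult_right_mono)
    finally show False using abs_ext[of j0] j0 big unfolding ext_def by simp
  qed
  then obtain k where k: "k < N" "lam k * \<bar>G k j0\<bar> > of_int \<Delta>" by blast
  have g: "small_integral (G k)" "conformal (G k) w" "lam k \<ge> 0" using dec k by auto
  then have "\<bar>G k j0\<bar> \<le> of_int \<Delta>" unfolding small_integral_def by simp
  then have lam_ge_1: "lam k \<ge> 1"
    using k(2) mult_right_mono[of "lam k" 1 "\<bar>G k j0\<bar>"] by (cases "lam k \<le> 1") simp_all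
  have "G k j0 \<noteq> 0" using k Delta_ge_1 by auto
  moreover have "0 \<le> ext (G k) c * ext w c \<and> \<bar>ext (G k) c\<bar> \<le> \<bar>ext w c\<bar>" if c: "c < n + l" for c
  proof
    show "0 \<le> ext (G k) c * ext w c" using g(2) c unfolding conformal_def sign_conform_iff by blast
    have "\<bar>ext (G k) c\<bar> \<le> lam k * \<bar>ext (G k) c\<bar>"
      using lam_ge_1 mult_right_mono[of 1 "lam k" "\<bar>ext (G k) c\<bar>"] by simp
    also have "\<dots> \<le> (\<Sum>k<N. lam k * \<bar>ext (G k) c\<bar>)"
      using k(1) dec by (intro member_le_sum) auto
    finally show "\<bar>ext (G k) c\<bar> \<le> \<bar>ext w c\<bar>" using abs_ext[OF c] by simp
  qed
  ultimately show ?thesis using that g(1) j0 by blast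
qed

text \<open>Subtracting a small integral vector g that is conformal to z - xs and dominated by it keeps
  z integral and feasible, and moves it closer to xs in every coordinate.\<close>

lemma proximity_step:
  assumes xs: "feasible b xs" and z: "\<forall>j<n. z j \<in> \<int>" "feasible b z"
    and j0: "j0 < n" "\<bar>z j0 - xs j0\<bar> > of_nat n * of_int \<Delta>"
  obtains z' where "\<forall>j<n. z' j \<in> \<int>" "feasible b z'" "(\<Sum>j<n. \<bar>z' j - xs j\<bar>) < (\<Sum>j<n. \<bar>z j - xs j\<bar>)"
proof -
  define w where "w j = z j - xs j" for j
  obtain g where g: "small_integral g" "\<exists>j<n. g j \<noteq> 0"
    and dominated: "\<And>c. c < n + l \<Longrightarrow> 0 \<le> ext g c * ext w c \<and> \<bar>ext g c\<bar> \<le> \<bar>ext w c\<bar>"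
    using ex_small_integral_conformal_le[of j0 w] j0 unfolding w_def by blast
  define z' where "z' j = z j - g j" for j
  have "\<forall>j<n. z' j \<in> \<int>" using z(1) g(1) unfolding small_integral_def z'_def by auto
  moreover have "feasible b z'" unfolding feasible_def
  proof (intro allI impI)
    fix i assume i: "i < l"
    have "0 \<le> row_prod i g * row_prod i w" "\<bar>row_prod i g\<bar> \<le> \<bar>row_prod i w\<bar>"
      using dominated[of "n + i"] i unfolding ext_def by simp_all
    then have "row_prod i z' \<le> max (row_prod i z) (row_prod i xs)"
      unfolding z'_def w_def row_prod_diff by (auto simp: zero_le_mult_iff abs_if split: if_splits)
    moreover have "max (row_prod i z) (row_prod i xs) \<le> b i" using xs z(2) i unfolding feasible_def by simp
    ultimately show "row_prod i z' \<le> b i" by (rule order_trans)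
  qed
  moreover have "(\<Sum>j<n. \<bar>z' j - xs j\<bar>) = (\<Sum>j<n. \<bar>z j - xs j\<bar>) - (\<Sum>j<n. \<bar>g j\<bar>)"
  proof -
    have "\<bar>z' j - xs j\<bar> = \<bar>z j - xs j\<bar> - \<bar>g j\<bar>" if "j < n" for j
      using dominated[of j] that abs_diff_eq_diff_abs[of "g j" "w j"] unfolding ext_def z'_def w_def
      by (simp add: algebra_simps)
    then show ?thesis by (simp add: sum_subtractf)
  qed
  moreover have "(\<Sum>j<n. \<bar>g j\<bar>) > 0" using g(2) by (auto intro: sum_pos2)
  ultimately show ?thesis using that[of z'] by simp
qed

lemma proximity:
  assumes q: "q \<noteq> 0" "\<forall>j<n. of_int q * xs j \<in> \<int>" and xs: "feasible b xs"
    and z0: "\<forall>j<n. z0 j \<in> \<int>" "feasible b z0"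
  obtains z where "\<forall>j<n. z j \<in> \<int>" "feasible b z" "\<forall>j<n. \<bar>z j - xs j\<bar> \<le> of_nat n * of_int \<Delta>"
proof -
  define P where "P z \<longleftrightarrow> (\<forall>j<n. z j \<in> \<int>) \<and> feasible b z" for z
  define dist where "dist z = (\<Sum>j<n. \<bar>z j - xs j\<bar>)" for z
  have dist_Ints: "of_int \<bar>q\<bar> * dist z \<in> \<int>" if "P z" for z
  proof -
    have "of_int \<bar>q\<bar> * \<bar>z j - xs j\<bar> \<in> \<int>" if "j < n" for j
    proof -
      have "of_int \<bar>q\<bar> * \<bar>z j - xs j\<bar> = \<bar>of_int q * z j - of_int q * xs j\<bar>"
        by (simp add: abs_mult right_diff_distrib[symmetric])
      also have "\<dots> \<in> \<int>" using \<open>P z\<close> q(2) that unfolding P_def by auto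
      finally show ?thesis .
    qed
    then show ?thesis unfolding dist_def sum_distrib_left by (intro Ints_sum) auto
  qed
  text \<open>Scaled by q, the distance becomes an integer, so a closest integral solution exists.\<close>
  define m where "m z = nat \<lfloor>of_int \<bar>q\<bar> * dist z\<rfloor>" for z
  have "P z0" using z0 unfolding P_def by simp
  then obtain z where z: "P z" and closest: "\<And>y. P y \<Longrightarrow> m z \<le> m y"
    using ex_has_least_nat[of P z0 m] by blast
  have "\<bar>z j - xs j\<bar> \<le> of_nat n * of_int \<Delta>" if j: "j < n" for j
  proof (rule ccontr)
    assume "\<not> ?thesis"
    then have far: "\<bar>z j - xs j\<bar> > of_nat n * of_int \<Delta>" by simp
    have zP: "\<forall>j<n. z j \<in> \<int>" "feasible b z" using z unfolding P_def by auto
    obtain z' where "\<forall>j<n. z' j \<in> \<int>" "feasible b z'" "dist z' < dist z"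
      using xs zP j far unfolding dist_def by (rule proximity_step[of b xs z j])
    then have z': "P z'" "dist z' < dist z" unfolding P_def by auto
    obtain a where a: "of_int \<bar>q\<bar> * dist z = of_int a" using dist_Ints[OF z] by (rule Ints_cases)
    obtain a' where a': "of_int \<bar>q\<bar> * dist z' = of_int a'" using dist_Ints[OF z'(1)] by (rule Ints_cases)
    have "of_int \<bar>q\<bar> * dist z' < of_int \<bar>q\<bar> * dist z" using z'(2) q(1) by simp
    moreover have "0 \<le> of_int \<bar>q\<bar> * dist z'" unfolding dist_def using q(1) by (simp add: sum_nonneg)
    ultimately have "m z' < m z" unfolding m_def a a' by simp
    then show False using closest[OF z'(1)] by simp
  qed
  then show ?thesis using that[of z] z unfolding P_def by blast
qed

end

theorem proposition4p1:
  fixes A :: "int mat" and b :: "int vec" and l n :: nat and \<Delta> :: int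
  assumes A: "A \<in> carrier_mat l n"
    and b: "b \<in> carrier_vec l"
    and Delta: "subdet_bound A \<Delta>"
    and sol: "\<exists>x \<in> carrier_vec n. \<forall>i < l. (A *\<^sub>v x) $ i \<le> b $ i"
  shows "\<exists>D d. D \<in> carrier_mat n l \<and> d \<in> carrier_vec n
     \<and> frac_norm_mat_le D \<Delta> \<and> frac_norm_vec_le d (int n * \<Delta>\<^sup>2)
     \<and> (\<forall>j < n. (D *\<^sub>v map_vec rat_of_int b + d) $ j \<in> \<int>)
     \<and> (\<forall>i < l. (map_mat rat_of_int A *\<^sub>v (D *\<^sub>v map_vec rat_of_int b + d)) $ i \<le> rat_of_int (b $ i))"
proof -
  interpret subdet_bounded A l n \<Delta> by unfold_locales (fact A Delta)+
  define bq where "bq i = rat_of_int (b $ i)" for i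
  have b_vec: "map_vec rat_of_int b = vec l bq" using b unfolding bq_def by auto
  obtain x0 where x0: "x0 \<in> carrier_vec n" "\<forall>i<l. (A *\<^sub>v x0) $ i \<le> b $ i" using sol by blast
  then have feas0: "feasible bq (\<lambda>j. rat_of_int (x0 $ j))"
    unfolding feasible_def bq_def by (simp add: row_prod_of_int)
  obtain D q where D: "D \<in> carrier_mat n l" and q: "q \<noteq> 0" "\<bar>q\<bar> \<le> \<Delta>"
    and D_entries: "\<And>j i. j < n \<Longrightarrow> i < l \<Longrightarrow> of_int q * D $$ (j, i) \<in> \<int> \<and> \<bar>of_int q * D $$ (j, i)\<bar> \<le> of_int \<Delta>"
    and x_Ints: "\<forall>j<n. of_int q * (D *\<^sub>v vec l bq) $ j \<in> \<int>" and x: "feasible bq (\<lambda>j. (D *\<^sub>v vec l bq) $ j)"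
    using ex_vertex_solution[OF feas0] unfolding bq_def by auto
  obtain z where z: "\<forall>j<n. z j \<in> \<int>" "feasible bq z"
    "\<forall>j<n. \<bar>z j - (D *\<^sub>v vec l bq) $ j\<bar> \<le> of_nat n * of_int \<Delta>"
    using proximity[OF q(1) x_Ints x _ feas0] by auto
  define d where "d = vec n (\<lambda>j. z j - (D *\<^sub>v vec l bq) $ j)"
  have d: "d \<in> carrier_vec n" and sol_z: "\<And>j. j < n \<Longrightarrow> (D *\<^sub>v map_vec rat_of_int b + d) $ j = z j"
    using D unfolding b_vec d_def by auto
  have "frac_norm_mat_le D \<Delta>"
    using D D_entries frac_le_if_mult_Ints[OF q] unfolding frac_norm_mat_le_def by simp
  moreover have "frac_norm_vec_le d (int n * \<Delta>\<^sup>2)"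
    using frac_le_diff_if_close[OF q Delta_ge_1] x_Ints z(1,3) unfolding frac_norm_vec_le_def d_def by auto
  moreover have "\<forall>j<n. (D *\<^sub>v map_vec rat_of_int b + d) $ j \<in> \<int>" using z(1) sol_z by simp
  moreover have "feasible bq (\<lambda>j. (D *\<^sub>v map_vec rat_of_int b + d) $ j)"
    by (simp add: feasible_cong[OF sol_z] z(2))
  then have "\<forall>i<l. (map_mat rat_of_int A *\<^sub>v (D *\<^sub>v map_vec rat_of_int b + d)) $ i \<le> rat_of_int (b $ i)"
    using D b d unfolding bq_def by (subst (asm) feasible_iff_mult_mat_vec_le) auto
  ultimately show ?thesis using D d by blast
qed

end
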